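(* Suppose there exists an $[n,k_0]$ code $C_0$ over $\mathbb{F}_q$ with $d(C_0^\perp)=\delta\ge 3$. If $C$ is an $[n,k]$ code over $\mathbb{F}_q$ with $d(C^\perp)=\delta$ and $k>k_0$, then $\gamma(C)\le k-d(C^\perp)+2$.
   Context: An $[n,k]$ code over $\mathbb{F}_q$ is a $k$-dimensional subspace $C\subseteq\mathbb{F}_q^n$; write $E=\{1,\dots,n\}$. For $\bm{x}\in\mathbb{F}_q^n$, $\mathrm{supp}(\bm{x})=\{i: x_i\neq 0\}$ and the weight is $|\mathrm{supp}(\bm{x})|$; for $B\subseteq\mathbb{F}_q^n$, $\mathrm{Supp}(B)=\bigcup_{\bm{x}\in B}\mathrm{supp}(\bm{x})$. $C^\perp$ is the dual code with respect to the standard inner product and $d(C^\perp)$ is the minimum weight of a nonzero codeword of $C^\perp$. The covering dimension is $\gamma(C)=\infty$ if $\mathrm{Supp}(C)\neq E$, and otherwise $\gamma(C)$ is the least positive integer $r$ such that $C$ has an $r$-dimensional subspace $D$ with $\mathrm{Supp}(D)=E$. *)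

theory Defs
  imports "HOL-Analysis.Analysis" "HOL-Library.Extended_Nat"
begin

text \<open>Linear codes of length n = CARD('n) over a finite field 'a (q = CARD('a)),
  i.e. subspaces of 'a ^ 'n; the coordinate set E is UNIV :: 'n set.\<close>

definition is_code :: "('a::{field,finite} ^ 'n::finite) set \<Rightarrow> nat \<Rightarrow> bool" where
  "is_code C k \<longleftrightarrow> vec.subspace C \<and> vec.dim C = k"

definition supp :: "'a::zero ^ 'n::finite \<Rightarrow> 'n set" where
  "supp x = {i. x $ i \<noteq> 0}"

definition Supp :: "('a::zero ^ 'n::finite) set \<Rightarrow> 'n set" where
  "Supp B = (\<Union>x\<in>B. supp x)"

definition wt :: "'a::zero ^ 'n::finite \<Rightarrow> nat" where
  "wt x = card (supp x)"

definition dual_code :: "('a::field ^ 'n::finite) set \<Rightarrow> ('a ^ 'n) set" where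
  "dual_code C = {y. \<forall>x\<in>C. (\<Sum>i\<in>UNIV. x $ i * y $ i) = 0}"

definition min_dist :: "('a::zero ^ 'n::finite) set \<Rightarrow> nat" where
  "min_dist D = (LEAST w. \<exists>x\<in>D. x \<noteq> 0 \<and> wt x = w)"

definition covering_dim :: "('a::{field,finite} ^ 'n::finite) set \<Rightarrow> enat" where
  "covering_dim C =
     (if Supp C \<noteq> UNIV then \<infinity>
      else enat (LEAST r. 0 < r \<and> (\<exists>D. vec.subspace D \<and> D \<subseteq> C \<and> vec.dim D = r \<and> Supp D = UNIV)))"

end

theory Submission
  imports Defs
begin

text \<open>A code \<open>C\<^sub>0\<close> whose dual has minimum distance \<open>\<delta>\<close> separates, by its parity-check
  syndromes, any set of vectors at mutual distance below \<open>\<delta>\<close>. The vectors supported on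
  \<open>\<delta> - 3\<close> fixed coordinates plus one further coordinate form such a set, which gives the
  packing bound \<open>q\<^bsup>\<delta>-3\<^esup>(1 + (q - 1)(n - \<delta> + 3)) \<le> q\<^bsup>k\<^sub>0\<^esup>\<close>.

  For \<open>C\<close>, dual distance \<open>\<delta>\<close> means that every pattern on \<open>\<delta> - 1\<close> coordinates occurs in
  \<open>C\<close>, so a single codeword \<open>d\<^sub>0\<close> covers a set \<open>T\<close> of \<open>\<delta> - 2\<close> coordinates. The other
  \<open>n - \<delta> + 2\<close> coordinates are covered by a set \<open>B \<subseteq> C\<close>, and as long as
  \<open>q\<^bsup>|B|\<^esup> > 1 + (q - 1)(n - \<delta> + 2)\<close> a counting argument yields weights \<open>f\<close> on \<open>B\<close>
  proportional to no coordinate column of \<open>B\<close>; eliminating one vector of \<open>B\<close> against the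
  others by means of \<open>f\<close> keeps every coordinate covered. By the packing bound and
  \<open>k > k\<^sub>0\<close>, \<open>B\<close> shrinks to \<open>k + 1 - \<delta>\<close> vectors, and \<open>span (d\<^sub>0, B)\<close> is a subcode
  of full support and dimension at most \<open>k + 2 - \<delta>\<close>.\<close>

definition dot :: "'a::field ^ 'n::finite \<Rightarrow> 'a ^ 'n \<Rightarrow> 'a" where
  "dot x y = (\<Sum>i\<in>UNIV. x $ i * y $ i)"

definition syndrome :: "('a::field ^ 'n::finite) set \<Rightarrow> 'a ^ 'n \<Rightarrow> 'a ^ 'n \<Rightarrow> 'a" where
  "syndrome B y = restrict (\<lambda>b. dot b y) B"

definition dual_distance_ge :: "('a::field ^ 'n::finite) set \<Rightarrow> nat \<Rightarrow> bool" where
  "dual_distance_ge C \<delta> \<longleftrightarrow> (\<forall>y\<in>dual_code C. y \<noteq> 0 \<longrightarrow> \<delta> \<le> wt y)"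

lemma card_field_ge_2: "2 \<le> CARD('a::{field,finite})"
proof -
  have "card {0::'a, 1} \<le> CARD('a)" by (rule card_mono) auto
  then show ?thesis by simp
qed

lemma dual_code_dot: "dual_code C = {y. \<forall>x\<in>C. dot x y = 0}"
  by (simp add: dual_code_def dot_def)

lemma dot_diff_right: "dot x (y - z) = dot x y - dot x z"
  by (simp add: dot_def algebra_simps sum_subtractf)

lemma dot_axis_left: "dot (axis j 1) y = y $ j"
  unfolding dot_def axis_def by (simp add: of_bool_def[symmetric])

lemma dot_eq_0_on_span:
  assumes "\<forall>b\<in>B. dot b y = 0" and "x \<in> vec.span B"
  shows "dot x y = 0"
proof -
  have "vec.subspace {x. dot x y = 0}"
    unfolding vec.subspace_def dot_def
    by (auto simp: distrib_right sum.distrib mult.assoc simp flip: sum_distrib_left)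
  then have "vec.span B \<subseteq> {x. dot x y = 0}"
    using assms(1) by (intro vec.span_minimal) auto
  then show ?thesis using assms(2) by auto
qed

lemma dot_diff_eq_0_if_syndrome_eq:
  assumes "syndrome B y = syndrome B y'" and "b \<in> B"
  shows "dot b (y - y') = 0"
  using fun_cong[OF assms(1), of b] assms(2) by (simp add: syndrome_def dot_diff_right)

lemma card_le_power_if_inj_on_syndrome:
  fixes B Y :: "('a::{field,finite} ^ 'n::finite) set"
  assumes "inj_on (syndrome B) Y"
  shows "card Y \<le> CARD('a) ^ card B"
proof -
  have "card Y = card (syndrome B ` Y)"
    using assms by (simp add: card_image)
  also have "\<dots> \<le> card (PiE B (\<lambda>_. UNIV :: 'a set))"
    by (rule card_mono) (auto simp: syndrome_def)
  also have "\<dots> = CARD('a) ^ card B"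
    by (simp add: card_PiE)
  finally show ?thesis .
qed

lemma dim_less_if_proper_subspace:
  fixes W :: "('a::field ^ 'n::finite) set"
  assumes "vec.subspace W" and "W \<noteq> UNIV"
  shows "vec.dim W < CARD('n)"
proof -
  have "vec.span W \<noteq> UNIV"
    using assms vec.span_eq_iff by metis
  then show ?thesis
    using dim_subset_UNIV_cart_gen[of W] vec.dim_eq_full[of W]
    by (simp add: vec.dimension_def card_cart_basis)
qed

lemma exists_nonzero_orthogonal:
  fixes W :: "('a::{field,finite} ^ 'n::finite) set"
  assumes "vec.subspace W" and "W \<noteq> UNIV"
  shows "\<exists>y. y \<noteq> 0 \<and> (\<forall>x\<in>W. dot x y = 0)"
proof -
  obtain B where B: "W \<subseteq> vec.span B" "card B = vec.dim W"
    using vec.basis_exists by blast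
  have "\<not> inj_on (syndrome B) UNIV"
  proof
    assume "inj_on (syndrome B) UNIV"
    then have "CARD('a) ^ CARD('n) \<le> CARD('a) ^ card B"
      using card_le_power_if_inj_on_syndrome by fastforce
    moreover have "CARD('a) ^ card B < CARD('a) ^ CARD('n)"
      using dim_less_if_proper_subspace[OF assms] B(2) card_field_ge_2[where 'a='a]
      by (intro power_strict_increasing) auto
    ultimately show False by simp
  qed
  then obtain y y' where "y \<noteq> y'" and "syndrome B y = syndrome B y'"
    unfolding inj_on_def by blast
  then have "\<forall>b\<in>B. dot b (y - y') = 0"
    using dot_diff_eq_0_if_syndrome_eq by blast
  then have "\<forall>x\<in>W. dot x (y - y') = 0"
    using dot_eq_0_on_span B(1) by blast
  then show ?thesis using \<open>y \<noteq> y'\<close> by (metis right_minus_eq)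
qed

lemma dual_distance_ge_min_dist: "dual_distance_ge C (min_dist (dual_code C))"
  unfolding dual_distance_ge_def min_dist_def by (auto intro: Least_le)

lemma supp_diff_subset: "supp (x - y :: 'a::ab_group_add ^ 'n::finite) \<subseteq> supp x \<union> supp y"
  by (auto simp: supp_def)

lemma Supp_mono: "A \<subseteq> B \<Longrightarrow> Supp A \<subseteq> Supp B"
  unfolding Supp_def by blast

lemma Supp_insert: "Supp (insert x A) = supp x \<union> Supp A"
  by (simp add: Supp_def)

lemma wt_le_card: "supp y \<subseteq> R \<Longrightarrow> wt y \<le> card R"
  unfolding wt_def by (rule card_mono) auto

lemma inj_on_syndrome_if_close:
  assumes "C0 \<subseteq> vec.span B" and "dual_distance_ge C0 \<delta>"
    and "\<forall>y\<in>Y. \<forall>y'\<in>Y. wt (y - y') < \<delta>"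
  shows "inj_on (syndrome B) Y"
proof (rule inj_onI)
  fix y y' assume "y \<in> Y" "y' \<in> Y" "syndrome B y = syndrome B y'"
  then have "\<forall>b\<in>B. dot b (y - y') = 0"
    using dot_diff_eq_0_if_syndrome_eq by blast
  then have "y - y' \<in> dual_code C0"
    using assms(1) dot_eq_0_on_span by (fastforce simp: dual_code_dot)
  moreover have "wt (y - y') < \<delta>" using assms(3) \<open>y \<in> Y\<close> \<open>y' \<in> Y\<close> by blast
  ultimately show "y = y'" using assms(2) by (force simp: dual_distance_ge_def)
qed

lemma card_le_if_dual_distance_ge:
  fixes C0 Y :: "('a::{field,finite} ^ 'n::finite) set"
  assumes "is_code C0 k0" and "dual_distance_ge C0 \<delta>"
    and "\<forall>y\<in>Y. \<forall>y'\<in>Y. wt (y - y') < \<delta>"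
  shows "card Y \<le> CARD('a) ^ k0"
proof -
  obtain B where B: "C0 \<subseteq> vec.span B" "card B = vec.dim C0"
    using vec.basis_exists by blast
  have "card Y \<le> CARD('a) ^ card B"
    using inj_on_syndrome_if_close[OF B(1) assms(2,3)] by (rule card_le_power_if_inj_on_syndrome)
  then show ?thesis
    using B(2) assms(1) by (simp add: is_code_def)
qed

lemma dual_distance_le_length:
  fixes C0 :: "('a::{field,finite} ^ 'n::finite) set"
  assumes "is_code C0 k0" and "dual_distance_ge C0 \<delta>" and "k0 < CARD('n)"
  shows "\<delta> \<le> CARD('n)"
proof (rule ccontr)
  assume "\<not> \<delta> \<le> CARD('n)"
  then have "\<forall>y\<in>UNIV. \<forall>y'\<in>UNIV. wt (y - y' :: 'a ^ 'n) < \<delta>"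
    using wt_le_card[of _ UNIV] by (meson not_le order.strict_trans1 subset_UNIV)
  then have "CARD('a) ^ CARD('n) \<le> CARD('a) ^ k0"
    using card_le_if_dual_distance_ge[OF assms(1,2)] by fastforce
  then show False
    using assms(3) card_field_ge_2[where 'a='a] by (simp add: power_le_imp_le_exp)
qed

lemma card_supported_on:
  "card {y :: 'a::{field,finite} ^ 'n::finite. supp y \<subseteq> S} = CARD('a) ^ card S"
proof -
  have "bij_betw (\<lambda>y. restrict (\<lambda>i. y $ i) S) {y. supp y \<subseteq> S} (PiE S (\<lambda>_. UNIV))"
    by (rule bij_betw_byWitness[where f' = "\<lambda>f. \<chi> i. if i \<in> S then f i else 0"])
      (auto simp: supp_def vec_eq_iff PiE_def extensional_def split: if_splits)
  then have "card {y :: 'a ^ 'n. supp y \<subseteq> S} = card (PiE S (\<lambda>_. UNIV :: 'a set))"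
    by (rule bij_betw_same_card)
  then show ?thesis
    by (simp add: card_PiE)
qed

lemma card_supported_on_insert:
  fixes T :: "'n::finite set"
  shows "card {y :: 'a::{field,finite} ^ 'n. \<exists>i. supp y \<subseteq> insert i T}
    = CARD('a) ^ card T * (1 + (CARD('a) - 1) * card (UNIV - T))"
proof -
  let ?q = "CARD('a)"
  let ?S = "\<lambda>R. {y :: 'a ^ 'n. supp y \<subseteq> R}"
  define P where "P i = ?S (insert i T) - ?S T" for i
  have split: "{y :: 'a ^ 'n. \<exists>i. supp y \<subseteq> insert i T} = ?S T \<union> (\<Union>i\<in>UNIV - T. P i)"
    by (auto simp: P_def insert_absorb)
  have "P i \<inter> P j = {}" if "i \<noteq> j" for i j
    using that by (auto simp: P_def)
  moreover have "card (P i) = (?q - 1) * ?q ^ card T" if "i \<notin> T" for i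
  proof -
    have "?S T \<subseteq> ?S (insert i T)" by auto
    then have "card (P i) = ?q ^ Suc (card T) - ?q ^ card T"
      using that by (simp add: P_def card_Diff_subset card_supported_on)
    then show ?thesis by (simp add: diff_mult_distrib)
  qed
  ultimately have "card (\<Union>i\<in>UNIV - T. P i) = card (UNIV - T) * ((?q - 1) * ?q ^ card T)"
    by (subst card_UN_disjoint) auto
  moreover have "?S T \<inter> (\<Union>i\<in>UNIV - T. P i) = {}"
    by (auto simp: P_def)
  ultimately show ?thesis
    unfolding split by (simp add: card_Un_disjoint card_supported_on distrib_left mult.left_commute)
qed

lemma packing_bound:
  fixes C0 :: "('a::{field,finite} ^ 'n::finite) set" and T :: "'n set"
  assumes "is_code C0 k0" and "dual_distance_ge C0 \<delta>" and "card T + 3 \<le> \<delta>"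
  shows "CARD('a) ^ card T * (1 + (CARD('a) - 1) * card (UNIV - T)) \<le> CARD('a) ^ k0"
proof -
  let ?Y = "{y :: 'a ^ 'n. \<exists>i. supp y \<subseteq> insert i T}"
  have "wt (y - y') < \<delta>" if y: "y \<in> ?Y" and y': "y' \<in> ?Y" for y y'
  proof -
    obtain i i' where "supp y \<subseteq> insert i T" and "supp y' \<subseteq> insert i' T"
      using y y' by blast
    then have "supp (y - y') \<subseteq> insert i (insert i' T)"
      using supp_diff_subset by blast
    then have "wt (y - y') \<le> card (insert i (insert i' T))" by (rule wt_le_card)
    also have "\<dots> \<le> card T + 2"
      by (simp add: card_insert_if)
    finally show ?thesis using assms(3) by linarith
  qed
  then have "card ?Y \<le> CARD('a) ^ k0"
    by (intro card_le_if_dual_distance_ge[OF assms(1,2)]) blast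
  then show ?thesis
    by (simp only: card_supported_on_insert)
qed

lemma exists_codeword_one_on:
  fixes C :: "('a::{field,finite} ^ 'n::finite) set"
  assumes "vec.subspace C" and "dual_distance_ge C \<delta>" and "card T < \<delta>"
  shows "\<exists>d\<in>C. \<forall>t\<in>T. d $ t = 1"
proof -
  define Z where "Z = {z :: 'a ^ 'n. \<forall>t\<in>T. z $ t = 0}"
  define W where "W = {x + z |x z. x \<in> C \<and> z \<in> Z}"
  have "vec.subspace Z"
    unfolding vec.subspace_def Z_def by auto
  then have "vec.subspace W"
    unfolding W_def by (rule vec.subspace_sums[OF assms(1)])
  have "(\<chi> i. 1) \<in> W"
  proof (rule ccontr)
    \<comment> \<open>otherwise a nonzero vector orthogonal to \<open>C + Z\<close> is a dual codeword supported in \<open>T\<close>\<close>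
    assume "(\<chi> i. 1) \<notin> W"
    then have "W \<noteq> UNIV" by auto
    then obtain y where "y \<noteq> 0" and y: "\<forall>x\<in>W. dot x y = 0"
      using exists_nonzero_orthogonal[OF \<open>vec.subspace W\<close>] by auto
    have "0 \<in> C" and "0 \<in> Z"
      using assms(1) vec.subspace_0 by (auto simp: Z_def)
    have "C \<subseteq> W"
    proof
      fix x assume "x \<in> C"
      then have "x + 0 \<in> W" using \<open>0 \<in> Z\<close> unfolding W_def by blast
      then show "x \<in> W" by simp
    qed
    then have "y \<in> dual_code C"
      using y by (auto simp: dual_code_dot)
    moreover have "supp y \<subseteq> T"
    proof
      fix j assume "j \<in> supp y"
      show "j \<in> T"
      proof (rule ccontr)
        assume "j \<notin> T"
        then have "axis j 1 \<in> Z"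
          by (auto simp: Z_def axis_def)
        then have "0 + axis j 1 \<in> W"
          using \<open>0 \<in> C\<close> unfolding W_def by blast
        then have "y $ j = 0"
          using y dot_axis_left by (metis add_0)
        then show False using \<open>j \<in> supp y\<close> by (simp add: supp_def)
      qed
    qed
    then have "wt y < \<delta>"
      using wt_le_card assms(3) by (meson le_less_trans)
    ultimately show False
      using assms(2) \<open>y \<noteq> 0\<close> unfolding dual_distance_ge_def by (meson not_le)
  qed
  then obtain x z where "x \<in> C" and "z \<in> Z" and "(\<chi> i. 1) = x + z"
    unfolding W_def by blast
  then have "\<forall>t\<in>T. x $ t = 1"
    unfolding Z_def by (metis (mono_tags, lifting) add.right_neutral mem_Collect_eq vec_lambda_beta vector_add_component)
  then show ?thesis using \<open>x \<in> C\<close> by blast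
qed

lemma exists_weights_not_proportional:
  fixes B :: "('a::{field,finite} ^ 'n::finite) set" and I :: "'n set"
  assumes "1 + (CARD('a) - 1) * card I < CARD('a) ^ card B"
  shows "\<exists>f. (\<exists>b\<in>B. f b \<noteq> 0) \<and> (\<forall>c i. c \<noteq> 0 \<longrightarrow> i \<in> I \<longrightarrow> (\<exists>b\<in>B. f b \<noteq> c * b $ i))"
proof -
  define proportional where
    "proportional = (\<lambda>(c, i). restrict (\<lambda>b. c * b $ i) B) ` ((UNIV - {0 :: 'a}) \<times> I)"
  define Bad where "Bad = insert (restrict (\<lambda>b. 0) B) proportional"
  have "card proportional \<le> card ((UNIV - {0 :: 'a}) \<times> I)"
    unfolding proportional_def by (rule card_image_le) simp
  also have "\<dots> = (CARD('a) - 1) * card I"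
    by (simp add: card_cartesian_product card_Diff_singleton)
  finally have "card Bad < card (PiE B (\<lambda>_. UNIV :: 'a set))"
    using assms by (simp add: Bad_def card_PiE card_insert_if)
  then have "\<not> PiE B (\<lambda>_. UNIV) \<subseteq> Bad"
    by (meson card_mono finite leD)
  then obtain f where f: "f \<in> PiE B (\<lambda>_. UNIV)" and "f \<notin> Bad"
    by blast
  then have "f \<noteq> restrict (\<lambda>b. 0) B" and "f \<notin> proportional"
    unfolding Bad_def by simp_all
  show ?thesis
  proof (intro exI conjI allI impI)
    show "\<exists>b\<in>B. f b \<noteq> 0"
    proof (rule ccontr)
      assume "\<not> (\<exists>b\<in>B. f b \<noteq> 0)"
      then have "restrict f B = restrict (\<lambda>b. 0) B"
        by (intro restrict_ext) auto
      then show False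
        using \<open>f \<noteq> restrict (\<lambda>b. 0) B\<close> PiE_restrict[OF f] by simp
    qed
    fix c i assume "c \<noteq> (0 :: 'a)" and "i \<in> I"
    then have "restrict (\<lambda>b. c * b $ i) B \<in> proportional"
      unfolding proportional_def by (intro image_eqI[where x = "(c, i)"]) auto
    show "\<exists>b\<in>B. f b \<noteq> c * b $ i"
    proof (rule ccontr)
      assume "\<not> (\<exists>b\<in>B. f b \<noteq> c * b $ i)"
      then have "restrict f B = restrict (\<lambda>b. c * b $ i) B"
        by (intro restrict_ext) auto
      then show False
        using \<open>f \<notin> proportional\<close> \<open>restrict (\<lambda>b. c * b $ i) B \<in> proportional\<close>
          PiE_restrict[OF f] by simp
    qed
  qed
qed

lemma Supp_subset_eliminate:
  fixes B :: "('a::field ^ 'n::finite) set"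
  assumes "I \<subseteq> Supp B" and "b0 \<in> B" and "f b0 \<noteq> 0"
    and not_proportional: "\<forall>c i. c \<noteq> 0 \<longrightarrow> i \<in> I \<longrightarrow> (\<exists>b\<in>B. f b \<noteq> c * b $ i)"
  shows "I \<subseteq> Supp ((\<lambda>b. b - (f b / f b0) *s b0) ` (B - {b0}))"
proof
  fix i assume "i \<in> I"
  show "i \<in> Supp ((\<lambda>b. b - (f b / f b0) *s b0) ` (B - {b0}))"
  proof (rule ccontr)
    assume uncovered: "i \<notin> Supp ((\<lambda>b. b - (f b / f b0) *s b0) ` (B - {b0}))"
    have coord: "b $ i = f b / f b0 * b0 $ i" if "b \<in> B" for b
    proof (cases "b = b0")
      case True
      then show ?thesis using assms(3) by simp
    next
      case False
      then show ?thesis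
        using uncovered that by (auto simp: Supp_def supp_def)
    qed
    obtain b1 where "b1 \<in> B" and "b1 $ i \<noteq> 0"
      using assms(1) \<open>i \<in> I\<close> by (auto simp: Supp_def supp_def)
    then have "b0 $ i \<noteq> 0"
      using coord by fastforce
    have "f b = f b0 / b0 $ i * b $ i" if "b \<in> B" for b
      using coord[OF that] \<open>b0 $ i \<noteq> 0\<close> assms(3) by (simp add: field_simps)
    moreover have "f b0 / b0 $ i \<noteq> 0"
      using \<open>b0 $ i \<noteq> 0\<close> assms(3) by simp
    ultimately show False
      using not_proportional \<open>i \<in> I\<close> by blast
  qed
qed

lemma exists_smaller_cover:
  fixes B C :: "('a::{field,finite} ^ 'n::finite) set"
  assumes "vec.subspace C" and "B \<subseteq> C" and "I \<subseteq> Supp B"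
    and "1 + (CARD('a) - 1) * card I < CARD('a) ^ card B"
  shows "\<exists>B'. B' \<subseteq> C \<and> card B' < card B \<and> I \<subseteq> Supp B'"
proof -
  obtain f where "\<exists>b\<in>B. f b \<noteq> 0"
    and not_proportional: "\<forall>c i. c \<noteq> 0 \<longrightarrow> i \<in> I \<longrightarrow> (\<exists>b\<in>B. f b \<noteq> c * b $ i)"
    using exists_weights_not_proportional[OF assms(4)] by blast
  then obtain b0 where "b0 \<in> B" and "f b0 \<noteq> 0" by blast
  define B' where "B' = (\<lambda>b. b - (f b / f b0) *s b0) ` (B - {b0})"
  have "B' \<subseteq> C"
    using assms(1,2) \<open>b0 \<in> B\<close> unfolding B'_def
    by (auto intro!: vec.subspace_diff vec.subspace_scale)
  moreover have "card B' < card B"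
  proof -
    have "card B' \<le> card (B - {b0})"
      unfolding B'_def by (rule card_image_le) simp
    also have "\<dots> < card B"
      using \<open>b0 \<in> B\<close> by (intro card_Diff1_less) auto
    finally show ?thesis .
  qed
  moreover have "I \<subseteq> Supp B'"
    unfolding B'_def
    using Supp_subset_eliminate[OF assms(3) \<open>b0 \<in> B\<close> \<open>f b0 \<noteq> 0\<close> not_proportional] .
  ultimately show ?thesis by blast
qed

lemma exists_small_cover:
  fixes B C :: "('a::{field,finite} ^ 'n::finite) set"
  assumes "vec.subspace C" and "B \<subseteq> C" and "I \<subseteq> Supp B"
    and "1 + (CARD('a) - 1) * card I < CARD('a) ^ Suc r"
  shows "\<exists>B'. B' \<subseteq> C \<and> card B' \<le> r \<and> I \<subseteq> Supp B'"
  using assms(2,3)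
proof (induction "card B" arbitrary: B rule: less_induct)
  case less
  show ?case
  proof (cases "card B \<le> r")
    case True
    then show ?thesis using less.prems by blast
  next
    case False
    then have "CARD('a) ^ Suc r \<le> CARD('a) ^ card B"
      using card_field_ge_2[where 'a='a] by (intro power_increasing) auto
    then obtain B' where "B' \<subseteq> C" and "card B' < card B" and "I \<subseteq> Supp B'"
      using exists_smaller_cover[OF assms(1) less.prems] assms(4) by fastforce
    then show ?thesis using less.hyps by blast
  qed
qed

lemma covering_dim_le_dim:
  fixes C D :: "('a::{field,finite} ^ 'n::finite) set"
  assumes "vec.subspace D" and "D \<subseteq> C" and "Supp D = UNIV"
  shows "covering_dim C \<le> enat (vec.dim D)"
proof -
  have "Supp C = UNIV"
    using Supp_mono[OF assms(2)] assms(3) by blast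
  have "vec.dim D \<noteq> 0"
  proof
    assume "vec.dim D = 0"
    then have "Supp D = {}"
      by (auto simp: vec.dim_eq_0 Supp_def supp_def)
    then show False using assms(3) by simp
  qed
  then have "(LEAST r. 0 < r \<and> (\<exists>D'. vec.subspace D' \<and> D' \<subseteq> C \<and> vec.dim D' = r \<and> Supp D' = UNIV))
      \<le> vec.dim D"
    using assms by (intro Least_le) blast
  then show ?thesis
    using \<open>Supp C = UNIV\<close> by (simp add: covering_dim_def)
qed

lemma covering_dim_le:
  fixes C :: "('a::{field,finite} ^ 'n::finite) set"
  assumes "vec.subspace C" and "dual_distance_ge C \<delta>" and "2 \<le> \<delta>" and "\<delta> \<le> CARD('n) + 2"
    and "1 + (CARD('a) - 1) * (CARD('n) + 2 - \<delta>) < CARD('a) ^ m"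
  shows "covering_dim C \<le> enat m"
proof -
  have "\<delta> - 2 \<le> CARD('n)"
    using assms(4) by simp
  then obtain T :: "'n set" where "card T = \<delta> - 2"
    using obtain_subset_with_card_n by metis
  then have "card T < \<delta>" and "card (UNIV - T) = CARD('n) + 2 - \<delta>"
    using assms(3) by (simp_all add: card_Diff_subset)
  obtain d0 where "d0 \<in> C" and d0: "\<forall>t\<in>T. d0 $ t = 1"
    using exists_codeword_one_on[OF assms(1,2) \<open>card T < \<delta>\<close>] by blast
  have "i \<in> Supp C" for i
  proof -
    have "card {i} < \<delta>"
      using assms(3) by simp
    then obtain x where "x \<in> C" and "x $ i = 1"
      using exists_codeword_one_on[OF assms(1,2)] by blast
    then have "i \<in> supp x"
      by (simp add: supp_def)
    then show ?thesis
      using \<open>x \<in> C\<close> unfolding Supp_def by blast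
  qed
  then have "UNIV - T \<subseteq> Supp C"
    by blast
  obtain r where "m = Suc r"
    using assms(5) by (cases m) auto
  then have "1 + (CARD('a) - 1) * card (UNIV - T) < CARD('a) ^ Suc r"
    using assms(5) \<open>card (UNIV - T) = CARD('n) + 2 - \<delta>\<close> by simp
  then obtain B where "B \<subseteq> C" and "card B \<le> r" and "UNIV - T \<subseteq> Supp B"
    using exists_small_cover[OF assms(1) order_refl \<open>UNIV - T \<subseteq> Supp C\<close>] by blast
  define D where "D = vec.span (insert d0 B)"
  have "vec.subspace D"
    unfolding D_def by (rule vec.subspace_span)
  have "D \<subseteq> C"
    unfolding D_def using assms(1) \<open>d0 \<in> C\<close> \<open>B \<subseteq> C\<close> by (intro vec.span_minimal) auto
  have "Supp D = UNIV"
  proof -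
    have "T \<subseteq> supp d0"
      using d0 by (auto simp: supp_def)
    then have "UNIV \<subseteq> Supp (insert d0 B)"
      using \<open>UNIV - T \<subseteq> Supp B\<close> by (auto simp: Supp_insert)
    also have "\<dots> \<subseteq> Supp D"
      unfolding D_def by (intro Supp_mono vec.span_superset)
    finally show ?thesis by blast
  qed
  have "vec.dim D \<le> m"
  proof -
    have "vec.dim D = vec.dim (insert d0 B)"
      unfolding D_def by (rule vec.dim_span)
    also have "\<dots> \<le> card (insert d0 B)"
      by (rule vec.dim_le_card') simp
    also have "\<dots> \<le> m"
      using \<open>card B \<le> r\<close> \<open>m = Suc r\<close> by (simp add: card_insert_if)
    finally show ?thesis .
  qed
  have "covering_dim C \<le> enat (vec.dim D)"
    using \<open>vec.subspace D\<close> \<open>D \<subseteq> C\<close> \<open>Supp D = UNIV\<close> by (rule covering_dim_le_dim)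
  also have "\<dots> \<le> enat m"
    using \<open>vec.dim D \<le> m\<close> by simp
  finally show ?thesis .
qed

lemma power_exponent_bound:
  fixes q n \<delta> k0 k :: nat
  assumes "2 \<le> q" and "3 \<le> \<delta>" and "\<delta> \<le> n" and "k0 < k"
    and bound: "q ^ (\<delta> - 3) * (1 + (q - 1) * (n + 3 - \<delta>)) \<le> q ^ k0"
  shows "1 + (q - 1) * (n + 2 - \<delta>) < q ^ (k + 2 - \<delta>)"
proof -
  define A where "A = 1 + (q - 1) * (n + 3 - \<delta>)"
  have smaller: "1 + (q - 1) * (n + 2 - \<delta>) < A"
    using assms(1,3) unfolding A_def by simp
  have "2 \<le> A"
    using assms(1,3) unfolding A_def by (simp add: Suc_le_eq)
  then have "q ^ (\<delta> - 3) < q ^ (\<delta> - 3) * A"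
    using assms(1) by simp
  also have "\<dots> \<le> q ^ k0"
    using bound unfolding A_def .
  finally have "q ^ (\<delta> - 3) < q ^ k0" .
  then have "\<delta> - 3 < k0"
    using assms(1) by (simp add: power_less_imp_less_exp)
  then have "k0 = (\<delta> - 3) + (k0 + 3 - \<delta>)"
    using assms(2) by simp
  then have "q ^ (\<delta> - 3) * A \<le> q ^ (\<delta> - 3) * q ^ (k0 + 3 - \<delta>)"
    using bound unfolding A_def[symmetric] by (metis power_add)
  then have "A \<le> q ^ (k0 + 3 - \<delta>)"
    using assms(1) by simp
  also have "\<dots> \<le> q ^ (k + 2 - \<delta>)"
    using assms(1,4) by (intro power_increasing) auto
  finally show ?thesis using smaller by linarith
qed

theorem mainTheorem14:
  fixes C0 C :: "('a::{field,finite} ^ 'n::finite) set"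
    and k0 k \<delta> :: nat
  assumes "is_code C0 k0"
    and "min_dist (dual_code C0) = \<delta>"
    and "\<delta> \<ge> 3"
    and "is_code C k"
    and "min_dist (dual_code C) = \<delta>"
    and "k > k0"
  shows "covering_dim C \<le> enat (k + 2 - min_dist (dual_code C))"
proof -
  let ?q = "CARD('a)" and ?n = "CARD('n)"
  have dual_C0: "dual_distance_ge C0 \<delta>" and dual_C: "dual_distance_ge C \<delta>"
    using dual_distance_ge_min_dist assms(2,5) by metis+
  have "vec.subspace C" and "k \<le> ?n"
    using assms(4) dim_subset_UNIV_cart_gen[of C] by (auto simp: is_code_def)
  then have "\<delta> \<le> ?n"
    using dual_distance_le_length[OF assms(1) dual_C0] assms(6) by simp
  obtain T :: "'n set" where "card T = \<delta> - 3"
    using obtain_subset_with_card_n[of "\<delta> - 3" "UNIV :: 'n set"] \<open>\<delta> \<le> ?n\<close>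
    by (metis diff_le_self le_trans)
  then have "?q ^ (\<delta> - 3) * (1 + (?q - 1) * (?n + 3 - \<delta>)) \<le> ?q ^ k0"
    using packing_bound[OF assms(1) dual_C0, of T] assms(3) \<open>\<delta> \<le> ?n\<close>
    by (simp add: card_Diff_subset)
  then have "1 + (?q - 1) * (?n + 2 - \<delta>) < ?q ^ (k + 2 - \<delta>)"
    using power_exponent_bound card_field_ge_2 assms(3,6) \<open>\<delta> \<le> ?n\<close> by blast
  then show ?thesis
    using covering_dim_le[OF \<open>vec.subspace C\<close> dual_C] assms(3,5) \<open>\<delta> \<le> ?n\<close> by simp
qed

end
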